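(* For every equivalence class $[i]\in I/\sim$, the subspace $V_{[i]}=\bigoplus_{i'\in[i]}\mathbb F v_{i'}$ is a $k$-submodule of $\mathbb V$.
   Context: Fix integers $n\ge 2$ and $1\le k\le n$ and an arbitrary field $\mathbb F$; $S_n$ denotes the symmetric group on $n$ letters. A $k$-module over a linear space $\mathbb W$ is an $\mathbb F$-vector space $\mathbb V$ (the dimensions of $\mathbb V$ and $\mathbb W$ are arbitrary, possibly infinite) together with, for every $\sigma\in S_n$, an $n$-linear map $\mathbb V^k\times\mathbb W^{n-k}\to\mathbb V$, $(x_1,\dots,x_k,y_{k+1},\dots,y_n)\mapsto[x_1,\dots,x_k,y_{k+1},\dots,y_n]_\sigma$ (interpreted as an $n$-ary bracket in which the $l$-th argument is placed in position $\sigma(l)$). A $k$-submodule of $\mathbb V$ is a linear subspace $U$ such that $[u,x_2,\dots,x_k,y_{k+1},\dots,y_n]_\sigma\in U$ for all $\sigma\in S_n$, $u\in U$, $x_l\in\mathbb V$, $y_l\in\mathbb W$. Fix a basis $\mathfrak B'=\{w_j\}_{j\in J}$ of $\mathbb W$. A basis $\mathfrak B=\{v_i\}_{i\in I}$ of $\mathbb V$ is multiplicative (with respect to $\mathfrak B'$) if for all $\sigma\in S_n$, $i_1,\dots,i_k\in I$, $j_{k+1},\dots,j_n\in J$, the element $[v_{i_1},\dots,v_{i_k},w_{j_{k+1}},\dots,w_{j_n}]_\sigma$ lies in $\mathbb F v_r$ for some $r\in I$. Throughout, $\mathbb V$ is a $k$-module over $\mathbb W$ with a multiplicative basis $\mathfrak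 B=\{v_i\}_{i\in I}$ with respect to $\mathfrak B'=\{w_j\}_{j\in J}$. Index machinery: let $\overline I=\{\overline i:i\in I\}$ and $\overline J=\{\overline j:j\in J\}$ be sets of new symbols disjoint from $I$ and $J$, with the convention $\overline{\overline x}=x$; for a tuple $X=(x_2,\dots,x_k)$ put $\overline X=(\overline x_2,\dots,\overline x_k)$, similarly for $Y$. For $\sigma\in S_n$, $i_1,\dots,i_k\in I$, $j_{k+1},\dots,j_n\in J$, let $a_\sigma(i_1,\dots,i_k,j_{k+1},\dots,j_n)=\emptyset$ if $[v_{i_1},\dots,v_{i_k},w_{j_{k+1}},\dots,w_{j_n}]_\sigma=0$ and $=\{r\}$ if this bracket is a nonzero element of $\mathbb F v_r$. For $i,i_2,\dots,i_k\in I$, $j_{k+1},\dots,j_n\in J$ let $b_\sigma(i,\overline i_2,\dots,\overline i_k,\overline j_{k+1},\dots,\overline j_n)=\{i'\in I: a_\sigma(i',i_2,\dots,i_k,j_{k+1},\dots,j_n)=\{i\}\}$. For $i\in I$, $X=(x_2,\dots,x_k)\in(I\,\dot\cup\,\overline I)^{k-1}$, $Y=(y_{k+1},\dots,y_n)\in(J\,\dot\cup\,\overline J)^{n-k}$ define $\mu(i,X,Y)\subseteq I$ by: $\mu(i,X,Y)=\bigcup_{\sigma\in S_n}a_\sigma(i,X,Y)$ if all $x_l\in I$ and all $y_l\in J$; $\mu(i,X,Y)=\bigcup_{\sigma\in S_n}b_\sigma(i,X,Y)$ if all $x_l\in\overline I$ and all $y_l\in\overline J$; and $\mu(i,X,Y)=\emptyset$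 otherwise. For $\mathfrak A\subseteq I$ set $\phi(\mathfrak A,X,Y)=\bigcup_{i\in\mathfrak A}\mu(i,X,Y)$. Connections: for distinct $i,i'\in I$, a connection from $i$ to $i'$ is a finite sequence $(X_1,Y_1,\dots,X_t,Y_t)$, $t\ge1$, with $X_m\in(I\,\dot\cup\,\overline I)^{k-1}$ and $Y_m\in(J\,\dot\cup\,\overline J)^{n-k}$, such that, setting $\mathfrak A_0=\{i\}$ and $\mathfrak A_m=\phi(\mathfrak A_{m-1},X_m,Y_m)$, one has $\mathfrak A_m\neq\emptyset$ for $1\le m\le t-1$ and $i'\in\mathfrak A_t$. We say $i$ is connected to $i'$ if such a connection exists; by convention every $i\in I$ is connected to itself. This relation, written $i\sim i'$, is an equivalence relation on $I$; $[i]$ denotes the class of $i$ and $I/\sim$ the set of classes. *)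

theory Defs
  imports Main "HOL.Vector_Spaces" "HOL-Combinatorics.Permutations"
begin

text \<open>The family of brackets is br :: (nat => nat) => 'v list => 'w list => 'v:
  br sigma [x_1,...,x_k] [y_(k+1),...,y_n] = [x_1,...,x_k,y_(k+1),...,y_n]_sigma.
  Barred symbols: for X in (I disjoint-union I-bar)^(k-1) we use lists of 'i + 'i,
  Inl i = i, Inr i = bar i (and similarly for Y with 'j + 'j).\<close>

definition S_n :: "nat \<Rightarrow> (nat \<Rightarrow> nat) set" where
  "S_n n = {\<sigma>. \<sigma> permutes {1..n}}"

definition is_k_module ::
  "('f::field \<Rightarrow> 'v::ab_group_add \<Rightarrow> 'v) \<Rightarrow> ('f \<Rightarrow> 'w::ab_group_add \<Rightarrow> 'w) \<Rightarrow> nat \<Rightarrow> nat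
   \<Rightarrow> ((nat \<Rightarrow> nat) \<Rightarrow> 'v list \<Rightarrow> 'w list \<Rightarrow> 'v) \<Rightarrow> bool" where
  "is_k_module scaleV scaleW n k br \<longleftrightarrow>
     vector_space scaleV \<and> vector_space scaleW \<and> 1 \<le> k \<and> k \<le> n \<and>
     (\<forall>\<sigma>\<in>S_n n. \<forall>xs ys. length xs = k \<and> length ys = n - k \<longrightarrow>
        (\<forall>p < k. Vector_Spaces.linear scaleV scaleV (\<lambda>x. br \<sigma> (xs[p := x]) ys)) \<and>
        (\<forall>p < n - k. Vector_Spaces.linear scaleW scaleV (\<lambda>y. br \<sigma> xs (ys[p := y]))))"

definition is_k_submodule ::
  "('f::field \<Rightarrow> 'v::ab_group_add \<Rightarrow> 'v) \<Rightarrow> nat \<Rightarrow> nat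
   \<Rightarrow> ((nat \<Rightarrow> nat) \<Rightarrow> 'v list \<Rightarrow> 'w list \<Rightarrow> 'v) \<Rightarrow> 'v set \<Rightarrow> bool" where
  "is_k_submodule scaleV n k br U \<longleftrightarrow>
     module.subspace scaleV U \<and>
     (\<forall>\<sigma>\<in>S_n n. \<forall>u\<in>U. \<forall>xs ys. length xs = k - 1 \<and> length ys = n - k \<longrightarrow>
        br \<sigma> (u # xs) ys \<in> U)"

definition is_basis_on :: "('f::field \<Rightarrow> 'v::ab_group_add \<Rightarrow> 'v) \<Rightarrow> 'i set \<Rightarrow> ('i \<Rightarrow> 'v) \<Rightarrow> bool" where
  "is_basis_on scale I v \<longleftrightarrow>
     inj_on v I \<and> \<not> module.dependent scale (v ` I) \<and> module.span scale (v ` I) = UNIV"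

definition multiplicative_basis ::
  "('f::field \<Rightarrow> 'v::ab_group_add \<Rightarrow> 'v) \<Rightarrow> nat \<Rightarrow> nat
   \<Rightarrow> ((nat \<Rightarrow> nat) \<Rightarrow> 'v list \<Rightarrow> 'w list \<Rightarrow> 'v)
   \<Rightarrow> 'i set \<Rightarrow> ('i \<Rightarrow> 'v) \<Rightarrow> 'j set \<Rightarrow> ('j \<Rightarrow> 'w) \<Rightarrow> bool" where
  "multiplicative_basis scaleV n k br I v J w \<longleftrightarrow>
     (\<forall>\<sigma>\<in>S_n n. \<forall>is js. length is = k \<and> length js = n - k \<and> set is \<subseteq> I \<and> set js \<subseteq> J \<longrightarrow>
        (\<exists>r\<in>I. \<exists>c. br \<sigma> (map v is) (map w js) = scaleV c (v r)))"

definition a_sig ::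
  "('f::field \<Rightarrow> 'v::ab_group_add \<Rightarrow> 'v) \<Rightarrow> ((nat \<Rightarrow> nat) \<Rightarrow> 'v list \<Rightarrow> 'w list \<Rightarrow> 'v)
   \<Rightarrow> 'i set \<Rightarrow> ('i \<Rightarrow> 'v) \<Rightarrow> ('j \<Rightarrow> 'w) \<Rightarrow> (nat \<Rightarrow> nat) \<Rightarrow> 'i list \<Rightarrow> 'j list \<Rightarrow> 'i set" where
  "a_sig scaleV br I v w \<sigma> is js =
     {r\<in>I. br \<sigma> (map v is) (map w js) \<noteq> 0 \<and> (\<exists>c. br \<sigma> (map v is) (map w js) = scaleV c (v r))}"

definition b_sig ::
  "('f::field \<Rightarrow> 'v::ab_group_add \<Rightarrow> 'v) \<Rightarrow> ((nat \<Rightarrow> nat) \<Rightarrow> 'v list \<Rightarrow> 'w list \<Rightarrow> 'v)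
   \<Rightarrow> 'i set \<Rightarrow> ('i \<Rightarrow> 'v) \<Rightarrow> ('j \<Rightarrow> 'w) \<Rightarrow> (nat \<Rightarrow> nat) \<Rightarrow> 'i \<Rightarrow> 'i list \<Rightarrow> 'j list \<Rightarrow> 'i set" where
  "b_sig scaleV br I v w \<sigma> i is js = {i'\<in>I. a_sig scaleV br I v w \<sigma> (i' # is) js = {i}}"

definition mu ::
  "('f::field \<Rightarrow> 'v::ab_group_add \<Rightarrow> 'v) \<Rightarrow> nat \<Rightarrow> ((nat \<Rightarrow> nat) \<Rightarrow> 'v list \<Rightarrow> 'w list \<Rightarrow> 'v)
   \<Rightarrow> 'i set \<Rightarrow> ('i \<Rightarrow> 'v) \<Rightarrow> ('j \<Rightarrow> 'w) \<Rightarrow> 'i \<Rightarrow> ('i + 'i) list \<Rightarrow> ('j + 'j) list \<Rightarrow> 'i set" where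
  "mu scaleV n br I v w i X Y =
     (if (\<forall>x\<in>set X. isl x) \<and> (\<forall>y\<in>set Y. isl y)
      then (\<Union>\<sigma>\<in>S_n n. a_sig scaleV br I v w \<sigma> (i # map projl X) (map projl Y))
      else if (\<forall>x\<in>set X. \<not> isl x) \<and> (\<forall>y\<in>set Y. \<not> isl y)
      then (\<Union>\<sigma>\<in>S_n n. b_sig scaleV br I v w \<sigma> i (map projr X) (map projr Y))
      else {})"

definition phi ::
  "('f::field \<Rightarrow> 'v::ab_group_add \<Rightarrow> 'v) \<Rightarrow> nat \<Rightarrow> ((nat \<Rightarrow> nat) \<Rightarrow> 'v list \<Rightarrow> 'w list \<Rightarrow> 'v)
   \<Rightarrow> 'i set \<Rightarrow> ('i \<Rightarrow> 'v) \<Rightarrow> ('j \<Rightarrow> 'w) \<Rightarrow> 'i set \<Rightarrow> ('i + 'i) list \<Rightarrow> ('j + 'j) list \<Rightarrow> 'i set" where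
  "phi scaleV n br I v w A X Y = (\<Union>i\<in>A. mu scaleV n br I v w i X Y)"

text \<open>A_m for a sequence of steps (X_1,Y_1),...,(X_t,Y_t) (stored 0-based in a list).\<close>
fun A_seq ::
  "('f::field \<Rightarrow> 'v::ab_group_add \<Rightarrow> 'v) \<Rightarrow> nat \<Rightarrow> ((nat \<Rightarrow> nat) \<Rightarrow> 'v list \<Rightarrow> 'w list \<Rightarrow> 'v)
   \<Rightarrow> 'i set \<Rightarrow> ('i \<Rightarrow> 'v) \<Rightarrow> ('j \<Rightarrow> 'w) \<Rightarrow> 'i set \<Rightarrow> (('i + 'i) list \<times> ('j + 'j) list) list
   \<Rightarrow> nat \<Rightarrow> 'i set" where
  "A_seq scaleV n br I v w A0 steps 0 = A0"
| "A_seq scaleV n br I v w A0 steps (Suc m) =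
     phi scaleV n br I v w (A_seq scaleV n br I v w A0 steps m) (fst (steps ! m)) (snd (steps ! m))"

definition is_connection ::
  "('f::field \<Rightarrow> 'v::ab_group_add \<Rightarrow> 'v) \<Rightarrow> nat \<Rightarrow> nat \<Rightarrow> ((nat \<Rightarrow> nat) \<Rightarrow> 'v list \<Rightarrow> 'w list \<Rightarrow> 'v)
   \<Rightarrow> 'i set \<Rightarrow> ('i \<Rightarrow> 'v) \<Rightarrow> 'j set \<Rightarrow> ('j \<Rightarrow> 'w) \<Rightarrow> 'i \<Rightarrow> 'i
   \<Rightarrow> (('i + 'i) list \<times> ('j + 'j) list) list \<Rightarrow> bool" where
  "is_connection scaleV n k br I v J w i i' steps \<longleftrightarrow>
     steps \<noteq> [] \<and>
     (\<forall>(X, Y)\<in>set steps. length X = k - 1 \<and> length Y = n - k \<and>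
        set X \<subseteq> Inl ` I \<union> Inr ` I \<and> set Y \<subseteq> Inl ` J \<union> Inr ` J) \<and>
     (\<forall>m. 1 \<le> m \<and> m \<le> length steps - 1 \<longrightarrow> A_seq scaleV n br I v w {i} steps m \<noteq> {}) \<and>
     i' \<in> A_seq scaleV n br I v w {i} steps (length steps)"

definition connected ::
  "('f::field \<Rightarrow> 'v::ab_group_add \<Rightarrow> 'v) \<Rightarrow> nat \<Rightarrow> nat \<Rightarrow> ((nat \<Rightarrow> nat) \<Rightarrow> 'v list \<Rightarrow> 'w list \<Rightarrow> 'v)
   \<Rightarrow> 'i set \<Rightarrow> ('i \<Rightarrow> 'v) \<Rightarrow> 'j set \<Rightarrow> ('j \<Rightarrow> 'w) \<Rightarrow> 'i \<Rightarrow> 'i \<Rightarrow> bool" where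
  "connected scaleV n k br I v J w i i' \<longleftrightarrow>
     i \<in> I \<and> i' \<in> I \<and>
     (i = i' \<or> (i \<noteq> i' \<and> (\<exists>steps. is_connection scaleV n k br I v J w i i' steps)))"

definition conn_rel ::
  "('f::field \<Rightarrow> 'v::ab_group_add \<Rightarrow> 'v) \<Rightarrow> nat \<Rightarrow> nat \<Rightarrow> ((nat \<Rightarrow> nat) \<Rightarrow> 'v list \<Rightarrow> 'w list \<Rightarrow> 'v)
   \<Rightarrow> 'i set \<Rightarrow> ('i \<Rightarrow> 'v) \<Rightarrow> 'j set \<Rightarrow> ('j \<Rightarrow> 'w) \<Rightarrow> 'i rel" where
  "conn_rel scaleV n k br I v J w = {(i, i'). connected scaleV n k br I v J w i i'}"

end

theory Submission
  imports Defs
begin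

text \<open>If i lies in the class C and the bracket of v_i with further basis vectors is nonzero, it is
  a multiple of some v_r with r in a_sigma(i, ...); appending the unbarred step that produced r to a
  connection from a representative of C to i gives a connection to r, so r lies in C again. Hence
  the brackets of basis vectors with first argument in C stay in the span of v(C), and
  multilinearity extends this to arbitrary arguments.\<close>

lemma (in module) span_induct_list:
  assumes "set xs \<subseteq> span S"
    and "\<And>ys p. length ys = length xs \<Longrightarrow> p < length xs \<Longrightarrow> subspace {x. P (ys[p := x])}"
    and "\<And>ys. length ys = length xs \<Longrightarrow> set ys \<subseteq> S \<Longrightarrow> P ys"
  shows "P xs"
  using assms
proof (induction xs arbitrary: P)
  case Nil
  then show ?case by simp
next
  case (Cons x xs)
  have "subspace {y. P (y # xs)}"
    using Cons.prems(2)[of "x # xs" 0] by simp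
  moreover have "P (b # xs)" if "b \<in> S" for b
  proof (rule Cons.IH[where P = "\<lambda>ys. P (b # ys)"])
    show "set xs \<subseteq> span S" using Cons.prems(1) by simp
    show "subspace {y. P (b # ys[p := y])}" if "length ys = length xs" "p < length xs" for ys p
      using Cons.prems(2)[of "b # ys" "Suc p"] that by simp
    show "P (b # ys)" if "length ys = length xs" "set ys \<subseteq> S" for ys
      using Cons.prems(3)[of "b # ys"] that \<open>b \<in> S\<close> by simp
  qed
  ultimately show ?case
    using span_induct[of x S "\<lambda>y. P (y # xs)"] Cons.prems(1) by simp
qed

lemma subspace_vimage_linear:
  assumes "Vector_Spaces.linear s1 s2 f" "module.subspace s2 S"
  shows "module.subspace s1 (f -` S)"
proof -
  interpret linear s1 s2 f by fact
  show ?thesis using assms(2) by (rule subspace_vimage)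
qed

definition admissible_step ::
  "nat \<Rightarrow> nat \<Rightarrow> 'i set \<Rightarrow> 'j set \<Rightarrow> ('i + 'i) list \<Rightarrow> ('j + 'j) list \<Rightarrow> bool" where
  "admissible_step n k I J X Y \<longleftrightarrow>
     length X = k - 1 \<and> length Y = n - k \<and> set X \<subseteq> Inl ` I \<union> Inr ` I \<and> set Y \<subseteq> Inl ` J \<union> Inr ` J"

lemma A_seq_append:
  "m \<le> length st \<Longrightarrow> A_seq scaleV n br I v w A0 (st @ st') m = A_seq scaleV n br I v w A0 st m"
  by (induction m) (auto simp: nth_append)

lemma mu_subset: "mu scaleV n br I v w i X Y \<subseteq> I"
  unfolding mu_def a_sig_def b_sig_def by auto

text \<open>Allowing the empty sequence of steps absorbs the reflexive case of the definition.\<close>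
lemma connected_iff_path:
  "connected scaleV n k br I v J w i0 i \<longleftrightarrow> i0 \<in> I \<and> i \<in> I \<and>
     (\<exists>st. (\<forall>(X, Y)\<in>set st. admissible_step n k I J X Y) \<and>
        (\<forall>m\<in>{1..length st}. A_seq scaleV n br I v w {i0} st m \<noteq> {}) \<and>
        i \<in> A_seq scaleV n br I v w {i0} st (length st))"
  (is "?lhs \<longleftrightarrow> _ \<and> _ \<and> (\<exists>st. ?path st)")
proof
  assume conn: ?lhs
  have "\<exists>st. ?path st"
  proof (cases "i = i0")
    case True
    then show ?thesis by (intro exI[of _ "[]"]) simp
  next
    case False
    then obtain st where st: "is_connection scaleV n k br I v J w i0 i st"
      using conn unfolding connected_def by blast
    have "A_seq scaleV n br I v w {i0} st m \<noteq> {}" if "m \<in> {1..length st}" for m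
      using st that unfolding is_connection_def by (cases "m = length st") auto
    with st show ?thesis
      unfolding is_connection_def admissible_step_def by blast
  qed
  with conn show "i0 \<in> I \<and> i \<in> I \<and> (\<exists>st. ?path st)"
    unfolding connected_def by blast
next
  assume "i0 \<in> I \<and> i \<in> I \<and> (\<exists>st. ?path st)"
  then obtain st where I: "i0 \<in> I" "i \<in> I" and st: "?path st" by blast
  show ?lhs
  proof (cases "st = [] \<or> i = i0")
    case True
    with st I show ?thesis unfolding connected_def by auto
  next
    case False
    with st have "is_connection scaleV n k br I v J w i0 i st"
      unfolding is_connection_def admissible_step_def by auto
    with False I show ?thesis unfolding connected_def by blast
  qed
qed

lemma connected_step:
  assumes "connected scaleV n k br I v J w i0 i"
    and "admissible_step n k I J X Y"
    and "r \<in> mu scaleV n br I v w i X Y"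
  shows "connected scaleV n k br I v J w i0 r"
proof -
  obtain st where
    adm: "\<forall>(X, Y)\<in>set st. admissible_step n k I J X Y" and
    nonempty: "\<forall>m\<in>{1..length st}. A_seq scaleV n br I v w {i0} st m \<noteq> {}" and
    i: "i \<in> A_seq scaleV n br I v w {i0} st (length st)" and
    i0: "i0 \<in> I"
    using assms(1) unfolding connected_iff_path by blast
  let ?st = "st @ [(X, Y)]"
  have last: "A_seq scaleV n br I v w {i0} ?st (length ?st)
      = phi scaleV n br I v w (A_seq scaleV n br I v w {i0} st (length st)) X Y"
    using A_seq_append[of "length st" st scaleV n br I v w "{i0}" "[(X, Y)]"] by simp
  with i assms(3) have r: "r \<in> A_seq scaleV n br I v w {i0} ?st (length ?st)"
    unfolding phi_def by blast
  have "A_seq scaleV n br I v w {i0} ?st m \<noteq> {}" if "m \<in> {1..length ?st}" for m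
  proof (cases "m \<le> length st")
    case True
    then show ?thesis using nonempty that by (simp add: A_seq_append)
  next
    case False
    then have "m = length ?st" using that by simp
    then show ?thesis using r by blast
  qed
  then have "\<forall>m\<in>{1..length ?st}. A_seq scaleV n br I v w {i0} ?st m \<noteq> {}" ..
  moreover have "\<forall>(X', Y')\<in>set ?st. admissible_step n k I J X' Y'"
    using adm assms(2) by simp
  moreover have "r \<in> I"
    using mu_subset assms(3) by (rule subsetD)
  ultimately show ?thesis
    unfolding connected_iff_path using i0 r by (intro conjI exI[of _ ?st])
qed

lemma quotient_conn_rel_step_closed:
  assumes "C \<in> I // conn_rel scaleV n k br I v J w" "i \<in> C"
    and "admissible_step n k I J X Y" "r \<in> mu scaleV n br I v w i X Y"
  shows "r \<in> C"
proof -
  obtain i0 where C: "C = conn_rel scaleV n k br I v J w `` {i0}"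
    using assms(1) unfolding quotient_def by blast
  with assms(2) have "connected scaleV n k br I v J w i0 i"
    unfolding conn_rel_def by simp
  then have "connected scaleV n k br I v J w i0 r"
    using assms(3,4) by (rule connected_step)
  with C show ?thesis
    unfolding conn_rel_def by simp
qed

lemma a_sig_subset_mu:
  assumes "\<sigma> \<in> S_n n"
  shows "a_sig scaleV br I v w \<sigma> (i # is) js \<subseteq> mu scaleV n br I v w i (map Inl is) (map Inl js)"
  using assms unfolding mu_def by (auto simp: comp_def)

lemma bracket_basis_in_span_class:
  assumes "vector_space scaleV" "multiplicative_basis scaleV n k br I v J w" "1 \<le> k"
    and "C \<in> I // conn_rel scaleV n k br I v J w" "i \<in> C" "\<sigma> \<in> S_n n"
    and "set is \<subseteq> I" "length is = k - 1" "set js \<subseteq> J" "length js = n - k"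
  shows "br \<sigma> (v i # map v is) (map w js) \<in> module.span scaleV (v ` C)"
proof -
  interpret vector_space scaleV by fact
  have "i \<in> I"
    using assms(4,5) unfolding quotient_def conn_rel_def connected_def by auto
  with assms(3,7,8) have "length (i # is) = k" "set (i # is) \<subseteq> I" by auto
  then obtain r c where "r \<in> I" and r: "br \<sigma> (map v (i # is)) (map w js) = scaleV c (v r)"
    using assms(2,6,9,10) unfolding multiplicative_basis_def by blast
  show ?thesis
  proof (cases "br \<sigma> (v i # map v is) (map w js) = 0")
    case True
    then show ?thesis by (simp add: span_zero)
  next
    case False
    with r \<open>r \<in> I\<close> have "r \<in> a_sig scaleV br I v w \<sigma> (i # is) js"
      unfolding a_sig_def by auto
    then have r_mu: "r \<in> mu scaleV n br I v w i (map Inl is) (map Inl js)"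
      by (rule subsetD[OF a_sig_subset_mu[OF assms(6)]])
    have "admissible_step n k I J (map Inl is) (map Inl js)"
      using assms(7-10) unfolding admissible_step_def by auto
    with assms(4,5) have "r \<in> C"
      using r_mu by (rule quotient_conn_rel_step_closed)
    then show ?thesis
      using r by (simp add: span_base span_scale)
  qed
qed

lemma bracket_in_subspace_from_basis:
  assumes module: "is_k_module scaleV scaleW n k br"
    and span_v: "module.span scaleV (v ` I) = UNIV"
    and span_w: "module.span scaleW (w ` J) = UNIV"
    and \<sigma>: "\<sigma> \<in> S_n n" and S: "module.subspace scaleV S"
    and basis: "\<And>i is js. i \<in> C \<Longrightarrow> set is \<subseteq> I \<Longrightarrow> length is = k - 1 \<Longrightarrow>
                  set js \<subseteq> J \<Longrightarrow> length js = n - k \<Longrightarrow> br \<sigma> (v i # map v is) (map w js) \<in> S"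
    and u: "u \<in> module.span scaleV (v ` C)" and xs: "length xs = k - 1" and ys: "length ys = n - k"
  shows "br \<sigma> (u # xs) ys \<in> S"
proof -
  interpret V: vector_space scaleV using module unfolding is_k_module_def by blast
  interpret W: vector_space scaleW using module unfolding is_k_module_def by blast
  have "1 \<le> k" using module unfolding is_k_module_def by blast
  have subspace_V: "V.subspace {x. br \<sigma> (xs'[p := x]) ys' \<in> S}"
    if "length xs' = k" "length ys' = n - k" "p < k" for xs' ys' p
  proof -
    have "Vector_Spaces.linear scaleV scaleV (\<lambda>x. br \<sigma> (xs'[p := x]) ys')"
      using module \<sigma> that unfolding is_k_module_def by blast
    from subspace_vimage_linear[OF this S] show ?thesis by (simp add: vimage_def)
  qed
  have subspace_W: "W.subspace {y. br \<sigma> xs' (ys'[p := y]) \<in> S}"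
    if "length xs' = k" "length ys' = n - k" "p < n - k" for xs' ys' p
  proof -
    have "Vector_Spaces.linear scaleW scaleV (\<lambda>y. br \<sigma> xs' (ys'[p := y]))"
      using module \<sigma> that unfolding is_k_module_def by blast
    from subspace_vimage_linear[OF this S] show ?thesis by (simp add: vimage_def)
  qed
  have basis_ys: "br \<sigma> (v i # map v is) ys' \<in> S"
    if "i \<in> C" "set is \<subseteq> I" "length is = k - 1" "length ys' = n - k" for i "is" ys'
  proof (rule W.span_induct_list[where S = "w ` J" and P = "\<lambda>l. br \<sigma> (v i # map v is) l \<in> S"])
    show "set ys' \<subseteq> W.span (w ` J)" using span_w by simp
    show "W.subspace {y. br \<sigma> (v i # map v is) (l[p := y]) \<in> S}"
      if "length l = length ys'" "p < length ys'" for l p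
      using subspace_W that \<open>length is = k - 1\<close> \<open>length ys' = n - k\<close> \<open>1 \<le> k\<close> by simp
    show "br \<sigma> (v i # map v is) l \<in> S" if "length l = length ys'" "set l \<subseteq> w ` J" for l
    proof -
      have "l \<in> map w ` lists J"
        using \<open>set l \<subseteq> w ` J\<close> lists_image[of w J] by auto
      then obtain js where "set js \<subseteq> J" "l = map w js" by auto
      then show ?thesis using basis that \<open>i \<in> C\<close> \<open>set is \<subseteq> I\<close> \<open>length is = k - 1\<close>
        \<open>length ys' = n - k\<close> by simp
    qed
  qed
  have basis_xs: "br \<sigma> (v i # xs') ys \<in> S" if "i \<in> C" "length xs' = k - 1" for i xs'
  proof (rule V.span_induct_list[where S = "v ` I" and P = "\<lambda>l. br \<sigma> (v i # l) ys \<in> S"])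
    show "set xs' \<subseteq> V.span (v ` I)" using span_v by simp
    show "V.subspace {x. br \<sigma> (v i # l[p := x]) ys \<in> S}"
      if "length l = length xs'" "p < length xs'" for l p
      using subspace_V[of "v i # l" ys "Suc p"] that \<open>length xs' = k - 1\<close> ys by simp
    show "br \<sigma> (v i # l) ys \<in> S" if "length l = length xs'" "set l \<subseteq> v ` I" for l
    proof -
      have "l \<in> map v ` lists I"
        using \<open>set l \<subseteq> v ` I\<close> lists_image[of v I] by auto
      then obtain "is" where "set is \<subseteq> I" "l = map v is" by auto
      then show ?thesis using basis_ys that \<open>i \<in> C\<close> \<open>length xs' = k - 1\<close> ys by simp
    qed
  qed
  show ?thesis
  proof (rule V.span_induct[OF u])
    show "V.subspace {x. br \<sigma> (x # xs) ys \<in> S}"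
      using subspace_V[of "undefined # xs" ys 0] xs ys \<open>1 \<le> k\<close> by simp
    show "br \<sigma> (x # xs) ys \<in> S" if "x \<in> v ` C" for x
      using that basis_xs xs by blast
  qed
qed

theorem mainTheorem5:
  fixes scaleV :: "'f::field \<Rightarrow> 'v::ab_group_add \<Rightarrow> 'v"
    and scaleW :: "'f \<Rightarrow> 'w::ab_group_add \<Rightarrow> 'w"
    and br :: "(nat \<Rightarrow> nat) \<Rightarrow> 'v list \<Rightarrow> 'w list \<Rightarrow> 'v"
    and n k :: nat
    and I :: "'i set" and v :: "'i \<Rightarrow> 'v"
    and J :: "'j set" and w :: "'j \<Rightarrow> 'w"
  assumes "2 \<le> n" and "1 \<le> k" and "k \<le> n"
    and "is_k_module scaleV scaleW n k br"
    and "is_basis_on scaleV I v"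
    and "is_basis_on scaleW J w"
    and "multiplicative_basis scaleV n k br I v J w"
  shows "\<forall>C \<in> I // conn_rel scaleV n k br I v J w.
           is_k_submodule scaleV n k br (module.span scaleV (v ` C))"
proof
  fix C assume C: "C \<in> I // conn_rel scaleV n k br I v J w"
  interpret vector_space scaleV using assms(4) unfolding is_k_module_def by blast
  have span_v: "span (v ` I) = UNIV" and span_w: "module.span scaleW (w ` J) = UNIV"
    using assms(5,6) unfolding is_basis_on_def by auto
  have "br \<sigma> (u # xs) ys \<in> span (v ` C)"
    if "\<sigma> \<in> S_n n" "u \<in> span (v ` C)" "length xs = k - 1" "length ys = n - k" for \<sigma> u xs ys
    using bracket_in_subspace_from_basis[OF assms(4) span_v span_w \<open>\<sigma> \<in> S_n n\<close> subspace_span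
        bracket_basis_in_span_class[OF vector_space_axioms assms(7,2) C _ \<open>\<sigma> \<in> S_n n\<close>]]
      that by blast
  then show "is_k_submodule scaleV n k br (span (v ` C))"
    unfolding is_k_submodule_def using subspace_span by blast
qed

end
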